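(* Let $n\ge 1$ and let $P\in\mathbb{R}^{n\times n}$ be a row-stochastic matrix. Let $P_S:\{w\in\mathbb{R}^n: w_1+\dots+w_n=0\}\to\mathbb{R}^n$ denote the restriction of $P$ to the subspace of vectors with mean zero, and suppose $\|P_S\|<1$. Let $w\in\mathbb{R}^n$ be a global maximizer of $$L(w)=\langle w,Pw\rangle-\sum_{i=1}^n\log\Big(\sum_{j=1}^n\exp(w_iw_j)\Big)$$ over $\mathbb{R}^n$. If $$\left|\left\langle w,\frac{\mathbf{1}}{\sqrt n}\right\rangle\right|\le\frac{1-\|P_S\|}{3}\,\|w\|,$$ where $\mathbf{1}=(1,1,\dots,1)\in\mathbb{R}^n$, then $$\|w\|^2\le\frac{2n\log n}{1-\|P_S\|}.$$
   Context: A matrix is row-stochastic if its entries are non-negative and each row sums to $1$. $\|\cdot\|$ denotes the Euclidean norm on vectors and $\langle\cdot,\cdot\rangle$ the standard inner product; $\|P_S\|$ is the operator norm of $P_S$ with respect to the Euclidean norms on its domain (the mean-zero subspace) and on $\mathbb{R}^n$, i.e. $\|P_S\|=\sup\{\|Pu\|:\ u_1+\dots+u_n=0,\ \|u\|=1\}$. *)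

theory Defs
  imports "HOL-Analysis.Analysis"
begin

definition row_stochastic :: "real^'n^'n \<Rightarrow> bool" where
  "row_stochastic P \<longleftrightarrow> (\<forall>i j. P $ i $ j \<ge> 0) \<and> (\<forall>i. (\<Sum>j\<in>UNIV. P $ i $ j) = 1)"

definition mean_zero :: "(real^'n) set" where
  "mean_zero = {u. (\<Sum>i\<in>UNIV. u $ i) = 0}"

definition restr_norm :: "real^'n^'n \<Rightarrow> real" where
  "restr_norm P = Sup (insert 0 {norm (P *v u) | u. u \<in> mean_zero \<and> norm u = 1})"

definition ones_vec :: "real^'n" where
  "ones_vec = (\<chi> i. 1)"

definition L_obj :: "real^'n^'n \<Rightarrow> real^'n \<Rightarrow> real" where
  "L_obj P w = w \<bullet> (P *v w) - (\<Sum>i\<in>UNIV. ln (\<Sum>j\<in>UNIV. exp (w $ i * w $ j)))"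

end

theory Submission
  imports Defs
begin

text \<open>Comparing with w = 0 gives L w \<ge> - n ln n, while each log-sum-exp term is at
  least w_i^2, so L w \<le> \<langle>w, P w\<rangle> - \<parallel>w\<parallel>^2. Since P fixes the unit vector
  e = 1/\<surd>n, splitting w = a e + u with u of mean zero gives
  \<langle>w, P w\<rangle> \<le> a^2 + \<parallel>P_S\<parallel> \<parallel>w\<parallel>^2. The hypothesis bounds a^2 by
  (1 - \<parallel>P_S\<parallel>)^2/9 \<parallel>w\<parallel>^2 \<le> (1 - \<parallel>P_S\<parallel>)/2 \<parallel>w\<parallel>^2, which leaves
  (1 - \<parallel>P_S\<parallel>)/2 \<parallel>w\<parallel>^2 \<le> n ln n.\<close>

lemma inner_le_invariant_unit_vector:
  fixes f :: "'a::real_inner \<Rightarrow> 'a"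
  assumes "linear f" and "norm e = 1" and "f e = e" and "s \<ge> 0"
    and orth_bound: "\<And>u. u \<bullet> e = 0 \<Longrightarrow> norm (f u) \<le> s * norm u"
  shows "w \<bullet> f w \<le> (w \<bullet> e)\<^sup>2 + s * (norm w)\<^sup>2"
proof -
  define a where "a = w \<bullet> e"
  define u where "u = w - a *\<^sub>R e"
  have ee: "e \<bullet> e = 1"
    using \<open>norm e = 1\<close> by (simp add: norm_eq_1)
  have ue: "u \<bullet> e = 0"
    by (simp add: u_def a_def inner_diff_left ee)
  have "orthogonal (a *\<^sub>R e) u"
    using ue by (simp add: orthogonal_def inner_commute)
  then have "(norm (a *\<^sub>R e + u))\<^sup>2 = (norm (a *\<^sub>R e))\<^sup>2 + (norm u)\<^sup>2"
    by (rule norm_add_Pythagorean)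
  then have "(norm u)\<^sup>2 \<le> (norm w)\<^sup>2"
    by (simp add: u_def)
  then have "norm u \<le> norm w"
    by (rule power2_le_imp_le) simp
  then have fu: "norm (f u) \<le> s * norm w"
    using orth_bound[OF ue] \<open>s \<ge> 0\<close> by (meson mult_left_mono order_trans)
  have "f w = a *\<^sub>R e + f u"
    using \<open>linear f\<close> \<open>f e = e\<close> by (simp add: u_def linear_diff linear_scale)
  then have "w \<bullet> f w = a\<^sup>2 + w \<bullet> f u"
    by (simp add: inner_add_right a_def power2_eq_square)
  also have "\<dots> \<le> a\<^sup>2 + norm w * (s * norm w)"
    using order_trans[OF norm_cauchy_schwarz mult_left_mono[OF fu norm_ge_zero]] by simp
  finally show ?thesis
    by (simp add: a_def power2_eq_square algebra_simps)
qed

lemma row_stochastic_mult_ones: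
  assumes "row_stochastic P"
  shows "P *v ones_vec = ones_vec"
  using assms unfolding row_stochastic_def ones_vec_def
  by (simp add: vec_eq_iff matrix_vector_mult_def)

lemma inner_ones_vec: "x \<bullet> ones_vec = (\<Sum>i\<in>UNIV. x $ i)"
  by (simp add: inner_vec_def ones_vec_def)

lemma norm_ones_vec: "norm (ones_vec :: real^'n) = sqrt (real CARD('n))"
  by (simp add: norm_eq_sqrt_inner inner_vec_def ones_vec_def)

lemma mean_zero_iff_orthogonal_ones: "u \<in> mean_zero \<longleftrightarrow> u \<bullet> ones_vec = 0"
  by (simp add: mean_zero_def inner_ones_vec)

lemma restr_norm_bound:
  fixes P :: "real^'n^'n"
  shows "restr_norm P \<ge> 0"
    and "u \<in> mean_zero \<Longrightarrow> norm (P *v u) \<le> restr_norm P * norm u"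
proof -
  let ?S = "insert 0 {norm (P *v u) | u. u \<in> mean_zero \<and> norm u = 1}"
  obtain K where K: "\<And>x. norm (P *v x) \<le> norm x * K"
    using bounded_linear.bounded[OF matrix_vector_mul_bounded_linear[of P]] by blast
  have "bdd_above ?S"
  proof (rule bdd_aboveI[of _ "max 0 K"])
    show "x \<le> max 0 K" if "x \<in> ?S" for x
      using that
    proof
      assume "x \<in> {norm (P *v u) | u. u \<in> mean_zero \<and> norm u = 1}"
      then obtain u where "x = norm (P *v u)" "norm u = 1"
        by blast
      then show ?thesis
        using K[of u] by simp
    qed simp
  qed
  then have upper: "x \<le> restr_norm P" if "x \<in> ?S" for x
    unfolding restr_norm_def using that by (intro cSup_upper)
  show "restr_norm P \<ge> 0"
    by (rule upper) simp
  assume "u \<in> mean_zero"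
  show "norm (P *v u) \<le> restr_norm P * norm u"
  proof (cases "u = 0")
    case False
    have "u /\<^sub>R norm u \<in> mean_zero"
      using \<open>u \<in> mean_zero\<close> by (simp add: mean_zero_iff_orthogonal_ones)
    then have "norm (P *v (u /\<^sub>R norm u)) \<le> restr_norm P"
      using False by (intro upper) auto
    then show ?thesis
      using False by (simp add: matrix_vector_mult_scaleR field_simps)
  qed simp
qed

lemma L_obj_zero: "L_obj P (0 :: real^'n) = - real CARD('n) * ln (real CARD('n))"
  by (simp add: L_obj_def)

lemma L_obj_le_quadratic: "L_obj P w \<le> w \<bullet> (P *v w) - (norm w)\<^sup>2"
proof -
  have "w $ i * w $ i \<le> ln (\<Sum>j\<in>UNIV. exp (w $ i * w $ j))" for i
  proof -
    have "exp (w $ i * w $ i) \<le> (\<Sum>j\<in>UNIV. exp (w $ i * w $ j))"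
      by (rule member_le_sum) auto
    then show ?thesis
      by (metis exp_gt_zero ln_exp ln_le_cancel_iff order_less_le_trans)
  qed
  then have "(\<Sum>i\<in>UNIV. w $ i * w $ i) \<le> (\<Sum>i\<in>UNIV. ln (\<Sum>j\<in>UNIV. exp (w $ i * w $ j)))"
    by (rule sum_mono)
  then show ?thesis
    by (simp add: L_obj_def power2_norm_eq_inner inner_vec_def)
qed

lemma row_stochastic_quadratic_form_le:
  fixes P :: "real^'n^'n"
  assumes "row_stochastic P"
  shows "w \<bullet> (P *v w) \<le> (w \<bullet> (ones_vec /\<^sub>R sqrt (real CARD('n))))\<^sup>2 + restr_norm P * (norm w)\<^sup>2"
proof (rule inner_le_invariant_unit_vector)
  show "P *v (ones_vec /\<^sub>R sqrt (real CARD('n))) = ones_vec /\<^sub>R sqrt (real CARD('n))"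
    using row_stochastic_mult_ones[OF assms] by (simp add: matrix_vector_mult_scaleR)
  show "norm (P *v u) \<le> restr_norm P * norm u"
    if "u \<bullet> (ones_vec /\<^sub>R sqrt (real CARD('n))) = 0" for u
    using that by (intro restr_norm_bound) (simp add: mean_zero_iff_orthogonal_ones)
qed (simp_all add: matrix_vector_mul_linear norm_ones_vec restr_norm_bound)

lemma row_stochastic_maximiser_bound:
  fixes P :: "real^'n^'n" and w :: "real^'n"
  assumes "row_stochastic P" and "\<forall>v. L_obj P v \<le> L_obj P w"
  shows "(1 - restr_norm P) * (norm w)\<^sup>2 - (w \<bullet> (ones_vec /\<^sub>R sqrt (real CARD('n))))\<^sup>2
    \<le> real CARD('n) * ln (real CARD('n))"
proof -
  have "L_obj P 0 \<le> L_obj P w"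
    using assms(2) by blast
  then show ?thesis
    using L_obj_zero[of P] L_obj_le_quadratic[of P w]
      row_stochastic_quadratic_form_le[OF assms(1), of w]
    by (simp add: left_diff_distrib)
qed

theorem theorem3p3:
  fixes P :: "real^'n^'n" and w :: "real^'n"
  assumes "row_stochastic P"
    and "restr_norm P < 1"
    and "\<forall>v. L_obj P v \<le> L_obj P w"
    and "\<bar>w \<bullet> (ones_vec /\<^sub>R sqrt (real CARD('n)))\<bar> \<le> (1 - restr_norm P) / 3 * norm w"
  shows "(norm w)\<^sup>2 \<le> 2 * real CARD('n) * ln (real CARD('n)) / (1 - restr_norm P)"
proof -
  define s where "s = restr_norm P"
  define a where "a = w \<bullet> (ones_vec /\<^sub>R sqrt (real CARD('n)))"
  have s: "0 \<le> s" "s < 1"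
    using restr_norm_bound(1) assms(2) by (simp_all add: s_def)
  have "a\<^sup>2 \<le> ((1 - s) / 3)\<^sup>2 * (norm w)\<^sup>2"
    using assms(4) unfolding a_def s_def
    by (metis abs_ge_zero power2_abs power_mono power_mult_distrib)
  also have "\<dots> \<le> (1 - s) / 2 * (norm w)\<^sup>2"
  proof (rule mult_right_mono)
    have "(x / 3)\<^sup>2 \<le> x / 2" if "0 \<le> x" "x \<le> 1" for x :: real
      using that mult_left_le[of x x] by (simp add: power2_eq_square)
    then show "((1 - s) / 3)\<^sup>2 \<le> (1 - s) / 2"
      using s by simp
  qed simp
  finally have "(1 - s) / 2 * (norm w)\<^sup>2 \<le> real CARD('n) * ln (real CARD('n))"
    using row_stochastic_maximiser_bound[OF assms(1,3)] unfolding a_def s_def by simp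
  then show ?thesis
    using s by (simp add: s_def field_simps)
qed

end
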